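(* Let $A$ and $B$ be real $n\times n$ matrices, and suppose there exists a real $n\times n$ matrix $X$ such that $AB-BA\geq I-X$ (entrywise). Then: (i) $\operatorname{tr}(X)\geq n$; (ii) $r(X)\geq1$, and consequently $\|X\|\geq1$ for the operator norm induced by any norm on $\mathbb R^n$; (iii) if $X$ is idempotent ($X^2=X$), then $X=I$.
   Context: Real $n\times n$ matrices are ordered entrywise: $X\leq Y$ means $x_{ij}\leq y_{ij}$ for all $i,j$. $I$ is the $n\times n$ identity matrix, $\operatorname{tr}$ the trace, and $r(X)$ the spectral radius of $X$ (maximum modulus of its complex eigenvalues). *)

theory Defs
  imports "Jordan_Normal_Form.Spectral_Radius"
begin

definition mat_le_entrywise :: "nat \<Rightarrow> real mat \<Rightarrow> real mat \<Rightarrow> bool" where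
  "mat_le_entrywise n X Y \<longleftrightarrow> (\<forall>i<n. \<forall>j<n. X $$ (i, j) \<le> Y $$ (i, j))"

definition mat_trace :: "real mat \<Rightarrow> real" where
  "mat_trace X = (\<Sum>i<dim_row X. X $$ (i, i))"

definition real_spectral_radius :: "real mat \<Rightarrow> real" where
  "real_spectral_radius X = spectral_radius (map_mat complex_of_real X)"

definition is_norm_on :: "nat \<Rightarrow> (real vec \<Rightarrow> real) \<Rightarrow> bool" where
  "is_norm_on n N \<longleftrightarrow>
     (\<forall>v\<in>carrier_vec n. N v \<ge> 0 \<and> (N v = 0 \<longleftrightarrow> v = 0\<^sub>v n)) \<and>
     (\<forall>v\<in>carrier_vec n. \<forall>c. N (c \<cdot>\<^sub>v v) = \<bar>c\<bar> * N v) \<and>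
     (\<forall>u\<in>carrier_vec n. \<forall>v\<in>carrier_vec n. N (u + v) \<le> N u + N v)"

definition induced_op_norm :: "nat \<Rightarrow> (real vec \<Rightarrow> real) \<Rightarrow> real mat \<Rightarrow> real" where
  "induced_op_norm n N X = (SUP v\<in>{v \<in> carrier_vec n. v \<noteq> 0\<^sub>v n}. N (X *\<^sub>v v) / N v)"

end

theory Submission
  imports Defs "Jordan_Normal_Form.Schur_Decomposition"
begin

text \<open>
  Since \<open>tr (AB - BA) = 0\<close>, summing the diagonal of \<open>I - X \<le> AB - BA\<close> gives
  \<open>n - tr X \<le> 0\<close>. Over \<open>\<complex>\<close> the eigenvalues of \<open>X\<close> are the diagonal of a Schur form and
  add up to \<open>tr X \<ge> n\<close>, so one of them has real part at least 1; hence \<open>r(X) \<ge> 1\<close>.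
  Any induced operator norm dominates every eigenvalue: iterate \<open>X\<close> on the real and
  imaginary parts of a complex eigenvector. An idempotent \<open>X\<close> has eigenvalues in
  \<open>{0, 1}\<close>; as they add up to at least \<open>n\<close>, all of them are 1, so \<open>X\<close> is invertible
  and \<open>X\<^sup>2 = X\<close> forces \<open>X = I\<close>.
\<close>

definition trace :: "'a::comm_ring_1 mat \<Rightarrow> 'a" where
  "trace A = (\<Sum>i<dim_row A. A $$ (i, i))"

lemma mat_trace_eq_trace: "mat_trace X = trace X"
  unfolding mat_trace_def trace_def ..

lemma trace_one_mat [simp]: "trace (1\<^sub>m n) = of_nat n"
  unfolding trace_def by simp

lemma trace_minus:
  assumes "A \<in> carrier_mat n n" and "B \<in> carrier_mat n n"
  shows "trace (A - B) = trace A - trace B"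
  using assms unfolding trace_def by (simp add: sum_subtractf)

lemma trace_mult_comm:
  assumes "A \<in> carrier_mat n m" and "B \<in> carrier_mat m n"
  shows "trace (A * B) = trace (B * A)"
  using assms unfolding trace_def
  by (simp add: scalar_prod_def atLeast0LessThan sum.swap[of _ "{..<n}"] mult.commute)

lemma trace_commutator:
  assumes "A \<in> carrier_mat n n" and "B \<in> carrier_mat n n"
  shows "trace (A * B - B * A) = 0"
  using assms by (simp add: trace_minus[of _ n] trace_mult_comm[of A n n B])

lemma trace_similar:
  assumes "similar_mat A B"
  shows "trace A = trace B"
proof -
  from similar_matD[OF assms] obtain n P Q where
    PQ: "{A, B, P, Q} \<subseteq> carrier_mat n n" "Q * P = 1\<^sub>m n" "A = P * B * Q" by auto
  hence "trace A = trace (P * (B * Q))" by (simp add: assoc_mult_mat[of P n n B n Q n])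
  also have "\<dots> = trace ((B * Q) * P)" using PQ(1) by (intro trace_mult_comm) auto
  also have "(B * Q) * P = B" using PQ by (auto simp: assoc_mult_mat[of B n n Q n P n])
  finally show ?thesis .
qed

lemma trace_of_real:
  assumes "A \<in> carrier_mat n n"
  shows "trace (map_mat of_real A) = of_real (trace A)"
  using assms unfolding trace_def by simp

lemma trace_mono:
  assumes "X \<in> carrier_mat n n" and "Y \<in> carrier_mat n n" and "mat_le_entrywise n X Y"
  shows "trace X \<le> trace Y"
  using assms unfolding trace_def mat_le_entrywise_def by (auto intro: sum_mono)

lemma mat_trace_ge_dim_if_commutator_ge:
  assumes "A \<in> carrier_mat n n" and "B \<in> carrier_mat n n" and "X \<in> carrier_mat n n"
    and "mat_le_entrywise n (1\<^sub>m n - X) (A * B - B * A)"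
  shows "real n \<le> mat_trace X"
proof -
  have "real n - trace X = trace (1\<^sub>m n - X)"
    using trace_minus[of "1\<^sub>m n" n X] assms(3) by simp
  also have "\<dots> \<le> trace (A * B - B * A)" using assms by (intro trace_mono) auto
  also have "\<dots> = 0" using assms(1,2) by (rule trace_commutator)
  finally show ?thesis by (simp add: mat_trace_eq_trace)
qed

section \<open>Eigenvalues via Schur triangularisation\<close>

lemma triangular_form_eigenvalues:
  fixes C :: "complex mat"
  assumes C: "C \<in> carrier_mat n n"
  obtains T where "T \<in> carrier_mat n n"
    and "\<And>k. eigenvalue C k \<longleftrightarrow> (\<exists>i<n. T $$ (i, i) = k)"
    and "trace C = (\<Sum>i<n. T $$ (i, i))"
proof -
  obtain as where "char_poly C = (\<Prod>a\<leftarrow>as. [:- a, 1:])"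
    using char_poly_factorized[OF C] by blast
  then obtain T where T: "T \<in> carrier_mat n n" "upper_triangular T" "similar_mat C T"
    using schur_decomposition_exists[OF C] by blast
  have char_poly: "char_poly C = (\<Prod>a\<leftarrow>diag_mat T. [:- a, 1:])"
    using char_poly_similar[OF T(3)] char_poly_upper_triangular[OF T(1,2)] by simp
  have "eigenvalue C k \<longleftrightarrow> (\<exists>i<n. T $$ (i, i) = k)" for k
    unfolding eigenvalue_root_char_poly[OF C] char_poly poly_prod_list_zero_iff
    using T(1) by (auto simp: diag_mat_def)
  moreover have "trace C = (\<Sum>i<n. T $$ (i, i))"
    using trace_similar[OF T(3)] T(1) by (simp add: trace_def)
  ultimately show thesis using that T(1) by blast
qed

lemma exists_eigenvalue_Re_ge_mean:
  fixes C :: "complex mat"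
  assumes C: "C \<in> carrier_mat n n" and n: "n > 0"
  shows "\<exists>k. eigenvalue C k \<and> Re (trace C) \<le> real n * Re k"
proof -
  obtain T where T: "T \<in> carrier_mat n n"
    "\<And>k. eigenvalue C k \<longleftrightarrow> (\<exists>i<n. T $$ (i, i) = k)" "trace C = (\<Sum>i<n. T $$ (i, i))"
    using triangular_form_eigenvalues[OF C] by blast
  have "\<exists>i<n. Re (trace C) \<le> real n * Re (T $$ (i, i))"
  proof (rule ccontr)
    assume "\<not> ?thesis"
    hence "(\<Sum>i<n. real n * Re (T $$ (i, i))) < (\<Sum>i<n. Re (trace C))"
      using n by (intro sum_strict_mono) auto
    thus False by (simp add: T(3) Re_sum sum_distrib_left)
  qed
  thus ?thesis using T(2) by blast
qed

lemma eigenvalues_Re_eq_one: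
  fixes C :: "complex mat"
  assumes C: "C \<in> carrier_mat n n"
    and le_one: "\<And>k. eigenvalue C k \<Longrightarrow> Re k \<le> 1"
    and trace: "real n \<le> Re (trace C)"
    and k: "eigenvalue C k"
  shows "Re k = 1"
proof -
  obtain T where T: "T \<in> carrier_mat n n"
    "\<And>k. eigenvalue C k \<longleftrightarrow> (\<exists>i<n. T $$ (i, i) = k)" "trace C = (\<Sum>i<n. T $$ (i, i))"
    using triangular_form_eigenvalues[OF C] by blast
  obtain i where i: "i < n" "T $$ (i, i) = k" using T(2) k by blast
  have diag_le: "Re (T $$ (j, j)) \<le> 1" if "j < n" for j using le_one T(2) that by blast
  show ?thesis
  proof (rule ccontr)
    assume "Re k \<noteq> 1"
    hence "Re (T $$ (i, i)) < 1" using le_one[OF k] i(2) by simp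
    hence "(\<Sum>j<n. Re (T $$ (j, j))) < (\<Sum>j<n. 1)"
      using diag_le i(1) by (intro sum_strict_mono_ex1) auto
    thus False using trace by (simp add: T(3) Re_sum)
  qed
qed

lemma eigenvalue_idempotent:
  fixes A :: "'a::field mat"
  assumes A: "A \<in> carrier_mat n n" and idem: "A * A = A" and k: "eigenvalue A k"
  shows "k = 0 \<or> k = 1"
proof -
  obtain v where v: "v \<in> carrier_vec n" "v \<noteq> 0\<^sub>v n" "A *\<^sub>v v = k \<cdot>\<^sub>v v"
    using k A unfolding eigenvalue_def eigenvector_def by auto
  have "(A * A) *\<^sub>v v = A *\<^sub>v (k \<cdot>\<^sub>v v)"
    using A v by (simp add: assoc_mult_mat_vec[of _ n n])
  also have "\<dots> = (k * k) \<cdot>\<^sub>v v" using A v(1,3) by (simp add: mult_mat_vec smult_smult_assoc)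
  finally have "(k * k) \<cdot>\<^sub>v v = k \<cdot>\<^sub>v v" using idem v(3) by simp
  then obtain i where "i < n" "v $ i \<noteq> 0" "(k * k) * v $ i = k * v $ i"
    using v(1,2)
    by (metis index_smult_vec(1) carrier_vecD eq_vecI index_zero_vec(1) index_zero_vec(2))
  hence "k * (k - 1) = 0" by (simp add: algebra_simps)
  thus ?thesis by simp
qed

lemma idempotent_mat_eq_one:
  fixes A :: "'a::field mat"
  assumes A: "A \<in> carrier_mat n n" and idem: "A * A = A" and not_ev: "\<not> eigenvalue A 0"
  shows "A = 1\<^sub>m n"
proof -
  have "char_matrix A 0 = A" using A unfolding char_matrix_def by (intro eq_matI) auto
  hence "det A \<noteq> 0" using not_ev unfolding eigenvalue_det[OF A] by simp
  then obtain B where B: "B \<in> carrier_mat n n" "B * A = 1\<^sub>m n"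
    using det_non_zero_imp_unit[OF A, of undefined] unfolding Units_def ring_mat_simps by auto
  have "A = (B * A) * A" using A by (simp add: B(2))
  also have "\<dots> = B * (A * A)" using A B(1) by (simp add: assoc_mult_mat[of _ n n])
  finally show ?thesis using idem B(2) by simp
qed

lemma idempotent_eq_one_if_mat_trace_ge:
  assumes X: "X \<in> carrier_mat n n" and idem: "X * X = X" and trace: "real n \<le> mat_trace X"
  shows "X = 1\<^sub>m n"
proof -
  define C where "C = map_mat complex_of_real X"
  have C: "C \<in> carrier_mat n n" using X unfolding C_def by simp
  have "C * C = C" unfolding C_def using of_real_hom.mat_hom_mult[OF X X] idem by metis
  hence "Re k \<le> 1" if "eigenvalue C k" for k using eigenvalue_idempotent[OF C _ that] by auto
  moreover have "real n \<le> Re (trace C)"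
    using trace X unfolding C_def by (simp add: trace_of_real mat_trace_eq_trace)
  ultimately have "\<not> eigenvalue C 0" using eigenvalues_Re_eq_one[OF C, of 0] by auto
  hence "\<not> eigenvalue X 0" using of_real_hom.eigenvalue_hom[OF X, of 0] unfolding C_def by auto
  thus ?thesis by (rule idempotent_mat_eq_one[OF X idem])
qed

lemma eigenvalue_cmod_le_real_spectral_radius:
  assumes X: "X \<in> carrier_mat n n" and k: "eigenvalue (map_mat complex_of_real X) k"
  shows "cmod k \<le> real_spectral_radius X"
proof -
  have C: "map_mat complex_of_real X \<in> carrier_mat n n" using X by simp
  have "n > 0" using eigenvalue_imp_nonzero_dim[OF C k] by simp
  moreover have "cmod k \<in> cmod ` spectrum (map_mat complex_of_real X)"
    using k by (simp add: spectrum_def)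
  ultimately show ?thesis
    unfolding real_spectral_radius_def by (rule spectral_radius_mem_max(2)[OF C])
qed

lemma le_if_pow_le_const_mult:
  fixes a b c :: real
  assumes "0 \<le> b" and pow_le: "\<And>m. a ^ m \<le> c * b ^ m"
  shows "a \<le> b"
proof (rule ccontr)
  assume "\<not> a \<le> b"
  hence a: "0 < a" "b / a < 1" using assms(1) by auto
  have c: "1 \<le> c" using pow_le[of 0] by simp
  then obtain m where "b ^ m / a ^ m < 1 / c"
    using real_arch_pow_inv[of "1 / c" "b / a"] a(2) by (auto simp: power_divide)
  hence "c * b ^ m < a ^ m" using a(1) c by (simp add: divide_simps mult.commute)
  thus False using pow_le[of m] by simp
qed

definition vec_l1_norm :: "real vec \<Rightarrow> real" where
  "vec_l1_norm v = (\<Sum>i<dim_vec v. \<bar>v $ i\<bar>)"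

lemma vec_l1_norm_nonneg: "0 \<le> vec_l1_norm v"
  unfolding vec_l1_norm_def by (intro sum_nonneg) auto

lemma vec_l1_norm_smult: "vec_l1_norm (c \<cdot>\<^sub>v v) = \<bar>c\<bar> * vec_l1_norm v"
  unfolding vec_l1_norm_def by (simp add: abs_mult sum_distrib_left)

lemma abs_index_le_vec_l1_norm: "i < dim_vec v \<Longrightarrow> \<bar>v $ i\<bar> \<le> vec_l1_norm v"
  unfolding vec_l1_norm_def by (intro member_le_sum) auto

lemma vec_l1_norm_eq_0_iff:
  assumes "v \<in> carrier_vec n"
  shows "vec_l1_norm v = 0 \<longleftrightarrow> v = 0\<^sub>v n"
proof -
  have "vec_l1_norm v = 0 \<longleftrightarrow> (\<forall>i<n. v $ i = 0)"
    using assms unfolding vec_l1_norm_def by (auto simp: sum_nonneg_eq_0_iff)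
  also have "\<dots> \<longleftrightarrow> v = 0\<^sub>v n" using assms by auto
  finally show ?thesis .
qed

lemma vec_l1_norm_mult_mat_vec_le:
  assumes X: "X \<in> carrier_mat n n" and v: "v \<in> carrier_vec n"
  shows "vec_l1_norm (X *\<^sub>v v) \<le> (\<Sum>i<n. \<Sum>j<n. \<bar>X $$ (i, j)\<bar>) * vec_l1_norm v"
proof -
  have entry: "\<bar>(X *\<^sub>v v) $ i\<bar> \<le> (\<Sum>j<n. \<bar>X $$ (i, j)\<bar>) * vec_l1_norm v" if i: "i < n" for i
  proof -
    have "\<bar>(X *\<^sub>v v) $ i\<bar> = \<bar>\<Sum>j<n. X $$ (i, j) * v $ j\<bar>"
      using X v i by (simp add: scalar_prod_def atLeast0LessThan)
    also have "\<dots> \<le> (\<Sum>j<n. \<bar>X $$ (i, j)\<bar> * vec_l1_norm v)"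
      using v by (intro order.trans[OF sum_abs] sum_mono)
        (simp add: abs_mult mult_left_mono abs_index_le_vec_l1_norm)
    finally show ?thesis by (simp add: sum_distrib_right)
  qed
  have dim: "dim_vec (X *\<^sub>v v) = n" using X by simp
  have "vec_l1_norm (X *\<^sub>v v) \<le> (\<Sum>i<n. (\<Sum>j<n. \<bar>X $$ (i, j)\<bar>) * vec_l1_norm v)"
    unfolding vec_l1_norm_def[of "X *\<^sub>v v"] dim by (intro sum_mono entry) simp
  thus ?thesis by (simp add: sum_distrib_right)
qed

lemma tendsto_vec_l1_norm:
  assumes "\<And>m. w m \<in> carrier_vec n" and "u \<in> carrier_vec n"
    and "\<And>i. i < n \<Longrightarrow> (\<lambda>m. w m $ i) \<longlonglongrightarrow> u $ i"
  shows "(\<lambda>m. vec_l1_norm (w m)) \<longlonglongrightarrow> vec_l1_norm u"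
    and "(\<lambda>m. vec_l1_norm (w m - u)) \<longlonglongrightarrow> 0"
proof -
  have dim: "dim_vec (w m) = n" "dim_vec u = n" for m using assms(1,2) by auto
  show "(\<lambda>m. vec_l1_norm (w m)) \<longlonglongrightarrow> vec_l1_norm u"
    unfolding vec_l1_norm_def dim using assms(3) by (intro tendsto_sum tendsto_rabs) auto
  have "(\<lambda>m. \<Sum>i<n. \<bar>w m $ i - u $ i\<bar>) \<longlonglongrightarrow> (\<Sum>i<n. \<bar>u $ i - u $ i\<bar>)"
    using assms(3) by (intro tendsto_sum tendsto_rabs tendsto_diff) auto
  thus "(\<lambda>m. vec_l1_norm (w m - u)) \<longlonglongrightarrow> 0"
    unfolding vec_l1_norm_def using dim by simp
qed

lemma bounded_vec_seq_convergent_subseq: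
  fixes w :: "nat \<Rightarrow> real vec"
  assumes "\<And>m i. i < k \<Longrightarrow> \<bar>w m $ i\<bar> \<le> B"
  shows "\<exists>r. strict_mono r \<and> (\<forall>i<k. convergent (\<lambda>m. w (r m) $ i))"
  using assms
proof (induction k)
  case 0
  show ?case using strict_mono_id by blast
next
  case (Suc k)
  then obtain r where r: "strict_mono r" "\<forall>i<k. convergent (\<lambda>m. w (r m) $ i)" by auto
  obtain f where f: "strict_mono f" "monoseq (\<lambda>m. w (r (f m)) $ k)"
    using seq_monosub[of "\<lambda>m. w (r m) $ k"] by blast
  have "Bseq (\<lambda>m. w (r (f m)) $ k)" using Suc.prems by (intro BseqI'[of _ B]) auto
  hence "convergent (\<lambda>m. w (r (f m)) $ k)" using f(2) Bseq_monoseq_convergent by blast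
  moreover have "convergent (\<lambda>m. w (r (f m)) $ i)" if "i < k" for i
    using convergent_subseq_convergent[OF r(2)[rule_format, OF that] f(1)] by (simp add: o_def)
  ultimately have "\<forall>i<Suc k. convergent (\<lambda>m. w ((r \<circ> f) m) $ i)" by (auto simp: less_Suc_eq)
  thus ?case using strict_mono_o[OF r(1) f(1)] by blast
qed

section \<open>Norms on \<open>\<real>\<^sup>n\<close> and induced operator norms\<close>

lemma map_vec_Re_mult_mat_vec:
  assumes "X \<in> carrier_mat n n" and "z \<in> carrier_vec n"
  shows "map_vec Re (map_mat complex_of_real X *\<^sub>v z) = X *\<^sub>v map_vec Re z"
  using assms by (intro eq_vecI) (auto simp: scalar_prod_def Re_sum)

lemma map_vec_Im_mult_mat_vec:
  assumes "X \<in> carrier_mat n n" and "z \<in> carrier_vec n"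
  shows "map_vec Im (map_mat complex_of_real X *\<^sub>v z) = X *\<^sub>v map_vec Im z"
  using assms by (intro eq_vecI) (auto simp: scalar_prod_def Im_sum)

locale vec_norm =
  fixes n :: nat and N :: "real vec \<Rightarrow> real"
  assumes is_norm: "is_norm_on n N"
begin

lemma nonneg: "v \<in> carrier_vec n \<Longrightarrow> 0 \<le> N v"
  using is_norm unfolding is_norm_on_def by blast

lemma eq_0_iff: "v \<in> carrier_vec n \<Longrightarrow> N v = 0 \<longleftrightarrow> v = 0\<^sub>v n"
  using is_norm unfolding is_norm_on_def by blast

lemma pos: "v \<in> carrier_vec n \<Longrightarrow> v \<noteq> 0\<^sub>v n \<Longrightarrow> 0 < N v"
  using nonneg[of v] eq_0_iff[of v] by fastforce

lemma smult: "v \<in> carrier_vec n \<Longrightarrow> N (c \<cdot>\<^sub>v v) = \<bar>c\<bar> * N v"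
  using is_norm unfolding is_norm_on_def by blast

lemma triangle: "u \<in> carrier_vec n \<Longrightarrow> v \<in> carrier_vec n \<Longrightarrow> N (u + v) \<le> N u + N v"
  using is_norm unfolding is_norm_on_def by blast

lemma lincomb_le:
  assumes "u \<in> carrier_vec n" and "v \<in> carrier_vec n"
  shows "N (a \<cdot>\<^sub>v u + b \<cdot>\<^sub>v v) \<le> \<bar>a\<bar> * N u + \<bar>b\<bar> * N v"
  using triangle[of "a \<cdot>\<^sub>v u" "b \<cdot>\<^sub>v v"] smult assms by simp

lemma le_sum_unit_vec:
  assumes v: "v \<in> carrier_vec n"
  shows "N v \<le> (\<Sum>i<n. \<bar>v $ i\<bar> * N (unit_vec n i))"
proof -
  have prefix: "N (vec n (\<lambda>i. if i < k then v $ i else 0))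
      \<le> (\<Sum>i<k. \<bar>v $ i\<bar> * N (unit_vec n i))" if "k \<le> n" for k
    using that
  proof (induction k)
    case 0
    have "vec n (\<lambda>i. if i < 0 then v $ i else 0) = 0\<^sub>v n" by auto
    thus ?case using eq_0_iff[of "0\<^sub>v n"] by simp
  next
    case (Suc k)
    have "vec n (\<lambda>i. if i < Suc k then v $ i else 0)
      = vec n (\<lambda>i. if i < k then v $ i else 0) + (v $ k) \<cdot>\<^sub>v unit_vec n k"
      using Suc.prems by (intro eq_vecI) (auto simp: less_Suc_eq)
    thus ?case
      using triangle[of "vec n (\<lambda>i. if i < k then v $ i else 0)" "(v $ k) \<cdot>\<^sub>v unit_vec n k"]
        Suc smult[of "unit_vec n k"] by simp
  qed
  have "vec n (\<lambda>i. if i < n then v $ i else 0) = v" using v by auto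
  thus ?thesis using prefix[of n] by simp
qed

lemma le_vec_l1_norm:
  assumes v: "v \<in> carrier_vec n"
  shows "N v \<le> (\<Sum>i<n. N (unit_vec n i)) * vec_l1_norm v"
proof -
  have "N v \<le> (\<Sum>i<n. \<bar>v $ i\<bar> * N (unit_vec n i))" by (rule le_sum_unit_vec[OF v])
  also have "\<dots> \<le> (\<Sum>i<n. vec_l1_norm v * N (unit_vec n i))"
    using v by (intro sum_mono mult_right_mono nonneg abs_index_le_vec_l1_norm) auto
  finally show ?thesis by (simp add: sum_distrib_left mult.commute)
qed

lemma tendsto_coordinatewise:
  assumes w: "\<And>m. w m \<in> carrier_vec n" and u: "u \<in> carrier_vec n"
    and lim: "\<And>i. i < n \<Longrightarrow> (\<lambda>m. w m $ i) \<longlonglongrightarrow> u $ i"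
  shows "(\<lambda>m. N (w m)) \<longlonglongrightarrow> N u"
proof -
  define K where "K = (\<Sum>i<n. N (unit_vec n i))"
  have bound: "\<bar>N (w m) - N u\<bar> \<le> vec_l1_norm (w m - u) * K" for m
  proof -
    have wm: "w m \<in> carrier_vec n" by (rule w)
    have "u + (w m - u) = w m" "w m + (u - w m) = u" using wm u by (auto intro!: eq_vecI)
    hence "N (w m) \<le> N u + N (w m - u)" "N u \<le> N (w m) + N (u - w m)"
      using triangle[of u "w m - u"] triangle[of "w m" "u - w m"] wm u by auto
    moreover have "vec_l1_norm (u - w m) = vec_l1_norm (w m - u)"
      using wm u unfolding vec_l1_norm_def by (simp add: abs_minus_commute)
    ultimately show ?thesis
      using le_vec_l1_norm[of "w m - u"] le_vec_l1_norm[of "u - w m"] wm u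
      unfolding K_def by (simp add: mult.commute)
  qed
  have "(\<lambda>m. vec_l1_norm (w m - u)) \<longlonglongrightarrow> 0" using tendsto_vec_l1_norm(2)[OF w u] lim .
  hence "(\<lambda>m. N (w m) - N u) \<longlonglongrightarrow> 0"
    by (rule tendsto_0_le[of _ _ _ K])
      (use bound in \<open>simp add: abs_of_nonneg[OF vec_l1_norm_nonneg]\<close>)
  thus ?thesis by (rule LIM_zero_cancel)
qed

lemma vec_l1_norm_le:
  obtains c where "0 < c" and "\<And>v. v \<in> carrier_vec n \<Longrightarrow> c * vec_l1_norm v \<le> N v"
proof -
  have "\<exists>c>0. \<forall>v\<in>carrier_vec n. c * vec_l1_norm v \<le> N v"
  proof (rule ccontr)
    assume contra: "\<not> ?thesis"
    have "\<exists>v. v \<in> carrier_vec n \<and> N v < inverse (real (Suc m)) * vec_l1_norm v" for m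
    proof -
      have "\<not> (\<forall>v\<in>carrier_vec n. inverse (real (Suc m)) * vec_l1_norm v \<le> N v)"
        using contra by simp
      thus ?thesis by (auto simp: not_le)
    qed
    then obtain v where v: "\<And>m. v m \<in> carrier_vec n"
      and small: "\<And>m. N (v m) < inverse (real (Suc m)) * vec_l1_norm (v m)"
      using choice[of "\<lambda>m v. v \<in> carrier_vec n \<and> N v < inverse (real (Suc m)) * vec_l1_norm v"]
      by blast
    have l1_pos: "0 < vec_l1_norm (v m)" for m
    proof -
      have "0 < inverse (real (Suc m)) * vec_l1_norm (v m)"
        using nonneg[OF v] small[of m] by (rule le_less_trans)
      thus ?thesis by (simp add: zero_less_mult_iff)
    qed
    \<comment> \<open>compactness of the \<open>\<ell>\<^sub>1\<close> unit sphere\<close>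
    define w where "w m = inverse (vec_l1_norm (v m)) \<cdot>\<^sub>v v m" for m
    have w: "w m \<in> carrier_vec n" for m unfolding w_def using v by simp
    have l1_w: "vec_l1_norm (w m) = 1" for m
      unfolding w_def vec_l1_norm_smult using l1_pos[of m] by simp
    have N_w: "N (w m) < inverse (real (Suc m))" for m
      using small[of m] l1_pos[of m] unfolding w_def smult[OF v] by (simp add: field_simps)
    have "\<bar>w m $ i\<bar> \<le> 1" if "i < n" for m i
      using abs_index_le_vec_l1_norm[of i "w m"] that carrier_vecD[OF w] l1_w by simp
    then obtain r where r: "strict_mono r" "\<forall>i<n. convergent (\<lambda>m. w (r m) $ i)"
      using bounded_vec_seq_convergent_subseq by blast
    define u where "u = vec n (\<lambda>i. lim (\<lambda>m. w (r m) $ i))"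
    have u: "u \<in> carrier_vec n" unfolding u_def by simp
    have lim: "(\<lambda>m. w (r m) $ i) \<longlonglongrightarrow> u $ i" if "i < n" for i
      using r(2) that unfolding u_def by (simp add: convergent_LIMSEQ_iff)
    have "(\<lambda>m. vec_l1_norm (w (r m))) \<longlonglongrightarrow> vec_l1_norm u"
      using tendsto_vec_l1_norm(1)[OF w u] lim .
    hence "vec_l1_norm u = 1" using l1_w by (simp add: LIMSEQ_const_iff)
    moreover have "N u = 0"
    proof -
      have "(\<lambda>m. N (w (r m))) \<longlonglongrightarrow> N u" using tendsto_coordinatewise[OF w u] lim .
      moreover have "(\<lambda>m. N (w (r m))) \<longlonglongrightarrow> 0"
      proof (rule tendsto_sandwich[OF _ _ tendsto_const LIMSEQ_inverse_real_of_nat])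
        show "\<forall>\<^sub>F m in sequentially. 0 \<le> N (w (r m))" using nonneg[OF w] by simp
        have "N (w (r m)) \<le> inverse (real (Suc m))" for m
        proof -
          have "inverse (real (Suc (r m))) \<le> inverse (real (Suc m))"
            using seq_suble[OF r(1), of m] by (simp add: le_imp_inverse_le)
          thus ?thesis using N_w[of "r m"] by linarith
        qed
        thus "\<forall>\<^sub>F m in sequentially. N (w (r m)) \<le> inverse (real (Suc m))" by simp
      qed
      ultimately show ?thesis by (rule LIMSEQ_unique)
    qed
    ultimately show False using eq_0_iff[OF u] vec_l1_norm_eq_0_iff[OF u] by simp
  qed
  thus thesis using that by blast
qed

text \<open>
  The supremum of an unbounded set of reals is unspecified, so \<open>induced_op_norm\<close> is only
  meaningful because the ratios are bounded, which needs the equivalence with \<open>\<ell>\<^sub>1\<close>.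
\<close>

lemma bdd_above_ratio:
  assumes X: "X \<in> carrier_mat n n"
  shows "bdd_above ((\<lambda>v. N (X *\<^sub>v v) / N v) ` {v \<in> carrier_vec n. v \<noteq> 0\<^sub>v n})"
proof -
  obtain c where c: "0 < c" "\<And>v. v \<in> carrier_vec n \<Longrightarrow> c * vec_l1_norm v \<le> N v"
    using vec_l1_norm_le by blast
  define K where "K = (\<Sum>i<n. N (unit_vec n i))"
  define M where "M = (\<Sum>i<n. \<Sum>j<n. \<bar>X $$ (i, j)\<bar>)"
  have "K \<ge> 0" "M \<ge> 0" unfolding K_def M_def by (auto intro!: sum_nonneg nonneg)
  show ?thesis
  proof (rule bdd_aboveI2)
    fix v :: "real vec" assume "v \<in> {v \<in> carrier_vec n. v \<noteq> 0\<^sub>v n}"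
    hence v: "v \<in> carrier_vec n" "0 < N v" using pos by auto
    have "N (X *\<^sub>v v) \<le> K * vec_l1_norm (X *\<^sub>v v)"
      unfolding K_def using X v(1) by (intro le_vec_l1_norm) simp
    also have "\<dots> \<le> K * (M * vec_l1_norm v)"
      unfolding M_def
      using vec_l1_norm_mult_mat_vec_le[OF X v(1)] \<open>K \<ge> 0\<close> by (rule mult_left_mono)
    also have "\<dots> \<le> K * (M * (N v / c))"
      using c v(1) \<open>K \<ge> 0\<close> \<open>M \<ge> 0\<close> by (intro mult_left_mono) (auto simp: field_simps)
    finally show "N (X *\<^sub>v v) / N v \<le> K * M / c" using v(2) by (simp add: divide_le_eq)
  qed
qed

lemma mult_mat_vec_le:
  assumes X: "X \<in> carrier_mat n n" and v: "v \<in> carrier_vec n"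
  shows "N (X *\<^sub>v v) \<le> induced_op_norm n N X * N v"
proof (cases "v = 0\<^sub>v n")
  case True
  have "X *\<^sub>v v = 0\<^sub>v n" using X True by (intro eq_vecI) (auto simp: scalar_prod_def)
  thus ?thesis using True eq_0_iff[of "0\<^sub>v n"] by simp
next
  case False
  have "N (X *\<^sub>v v) / N v \<le> induced_op_norm n N X"
    unfolding induced_op_norm_def using v False by (intro cSUP_upper bdd_above_ratio X) auto
  thus ?thesis using pos[OF v False] by (simp add: divide_le_eq mult.commute)
qed

definition re_im_norm :: "complex vec \<Rightarrow> real" where
  "re_im_norm z = N (map_vec Re z) + N (map_vec Im z)"

lemma re_im_norm_nonneg: "z \<in> carrier_vec n \<Longrightarrow> 0 \<le> re_im_norm z"
  unfolding re_im_norm_def by (simp add: nonneg add_nonneg_nonneg)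

lemma re_im_norm_pos:
  assumes z: "z \<in> carrier_vec n" and "z \<noteq> 0\<^sub>v n"
  shows "0 < re_im_norm z"
proof -
  have "map_vec Re z \<noteq> 0\<^sub>v n \<or> map_vec Im z \<noteq> 0\<^sub>v n"
  proof (rule ccontr)
    assume "\<not> ?thesis"
    hence "Re (z $ i) = 0 \<and> Im (z $ i) = 0" if "i < n" for i
      using that z by (metis carrier_vecD index_map_vec(1) index_zero_vec(1))
    hence "z = 0\<^sub>v n" using z by (intro eq_vecI) (auto simp: complex_eq_iff)
    thus False using assms(2) by contradiction
  qed
  moreover have "map_vec Re z \<in> carrier_vec n" "map_vec Im z \<in> carrier_vec n" using z by auto
  ultimately show ?thesis
    unfolding re_im_norm_def using pos nonneg by (auto intro: add_pos_nonneg add_nonneg_pos)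
qed

lemma re_im_norm_smult_le:
  assumes z: "z \<in> carrier_vec n"
  shows "re_im_norm (c \<cdot>\<^sub>v z) \<le> 2 * cmod c * re_im_norm z"
proof -
  let ?x = "map_vec Re z" and ?y = "map_vec Im z"
  have xy: "?x \<in> carrier_vec n" "?y \<in> carrier_vec n" using z by auto
  have "map_vec Re (c \<cdot>\<^sub>v z) = Re c \<cdot>\<^sub>v ?x + (- Im c) \<cdot>\<^sub>v ?y"
    "map_vec Im (c \<cdot>\<^sub>v z) = Im c \<cdot>\<^sub>v ?x + Re c \<cdot>\<^sub>v ?y"
    using z by (auto intro!: eq_vecI)
  hence "N (map_vec Re (c \<cdot>\<^sub>v z)) \<le> cmod c * N ?x + cmod c * N ?y"
    "N (map_vec Im (c \<cdot>\<^sub>v z)) \<le> cmod c * N ?x + cmod c * N ?y"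
    using lincomb_le[OF xy, of "Re c" "- Im c"] lincomb_le[OF xy, of "Im c" "Re c"]
      abs_Re_le_cmod[of c] abs_Im_le_cmod[of c] nonneg[OF xy(1)] nonneg[OF xy(2)]
    by (smt (verit, best) mult_right_mono abs_minus_cancel)+
  thus ?thesis unfolding re_im_norm_def by (simp add: algebra_simps)
qed

lemma re_im_norm_mult_mat_vec_le:
  assumes X: "X \<in> carrier_mat n n" and z: "z \<in> carrier_vec n"
  shows "re_im_norm (map_mat complex_of_real X *\<^sub>v z) \<le> induced_op_norm n N X * re_im_norm z"
  using mult_mat_vec_le[OF X, of "map_vec Re z"] mult_mat_vec_le[OF X, of "map_vec Im z"] z
  unfolding re_im_norm_def map_vec_Re_mult_mat_vec[OF X z] map_vec_Im_mult_mat_vec[OF X z]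
  by (simp add: distrib_left)

lemma eigenvalue_cmod_le_induced_op_norm:
  assumes X: "X \<in> carrier_mat n n" and k: "eigenvalue (map_mat complex_of_real X) k"
  shows "cmod k \<le> induced_op_norm n N X"
proof -
  define C where "C = map_mat complex_of_real X"
  define s where "s = induced_op_norm n N X"
  have C: "C \<in> carrier_mat n n" using X unfolding C_def by simp
  obtain z where z: "z \<in> carrier_vec n" "z \<noteq> 0\<^sub>v n" "C *\<^sub>v z = k \<cdot>\<^sub>v z"
    using k C unfolding C_def[symmetric] eigenvalue_def eigenvector_def by auto
  have z_pos: "0 < re_im_norm z" by (rule re_im_norm_pos[OF z(1,2)])
  have step: "re_im_norm (C *\<^sub>v y) \<le> s * re_im_norm y" if "y \<in> carrier_vec n" for y
    unfolding C_def s_def by (rule re_im_norm_mult_mat_vec_le[OF X that])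
  have "C *\<^sub>v z \<in> carrier_vec n" using C z(1) by simp
  hence "0 \<le> s * re_im_norm z" using step[OF z(1)] re_im_norm_nonneg[of "C *\<^sub>v z"] by linarith
  hence s: "0 \<le> s" using z_pos by (simp add: zero_le_mult_iff)
  have power: "re_im_norm ((k ^ m) \<cdot>\<^sub>v z) \<le> s ^ m * re_im_norm z" for m
  proof (induction m)
    case 0
    show ?case using z(1) by simp
  next
    case (Suc m)
    have "(k ^ Suc m) \<cdot>\<^sub>v z = C *\<^sub>v ((k ^ m) \<cdot>\<^sub>v z)"
      using C z by (simp add: mult_mat_vec smult_smult_assoc mult.commute)
    hence "re_im_norm ((k ^ Suc m) \<cdot>\<^sub>v z) \<le> s * re_im_norm ((k ^ m) \<cdot>\<^sub>v z)"
      using step z(1) by simp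
    also have "\<dots> \<le> s * (s ^ m * re_im_norm z)" using Suc s by (rule mult_left_mono)
    finally show ?case by simp
  qed
  show ?thesis
  proof (cases "k = 0")
    case False
    \<comment> \<open>the factor 2 is harmless: it disappears when taking m-th roots\<close>
    have "cmod k ^ m \<le> 2 * s ^ m" for m
    proof -
      have "re_im_norm z = re_im_norm (inverse (k ^ m) \<cdot>\<^sub>v ((k ^ m) \<cdot>\<^sub>v z))"
        using False by (simp add: smult_smult_assoc)
      also have "\<dots> \<le> 2 * cmod (inverse (k ^ m)) * re_im_norm ((k ^ m) \<cdot>\<^sub>v z)"
        using z(1) by (intro re_im_norm_smult_le) simp
      also have "\<dots> \<le> 2 * cmod (inverse (k ^ m)) * (s ^ m * re_im_norm z)"
        using power by (intro mult_left_mono) auto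
      also have "cmod (inverse (k ^ m)) = inverse (cmod k ^ m)"
        by (simp add: norm_inverse norm_power)
      finally have "cmod k ^ m * re_im_norm z \<le> 2 * s ^ m * re_im_norm z"
        using False by (simp add: field_simps)
      thus ?thesis using z_pos by simp
    qed
    thus ?thesis unfolding s_def[symmetric] using le_if_pow_le_const_mult[OF s] by blast
  qed (use s s_def in simp)
qed

lemma real_spectral_radius_le_induced_op_norm:
  assumes X: "X \<in> carrier_mat n n" and n: "n > 0"
  shows "real_spectral_radius X \<le> induced_op_norm n N X"
proof -
  have C: "map_mat complex_of_real X \<in> carrier_mat n n" using X by simp
  obtain k where "eigenvalue (map_mat complex_of_real X) k"
    and "cmod k = real_spectral_radius X"
    using spectral_radius_mem_max(1)[OF C n]
    unfolding real_spectral_radius_def spectrum_def by auto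
  thus ?thesis using eigenvalue_cmod_le_induced_op_norm[OF X] by metis
qed

end

theorem proposition4p4:
  fixes n :: nat and A B X :: "real mat"
  assumes "n > 0"
    and "A \<in> carrier_mat n n" and "B \<in> carrier_mat n n" and "X \<in> carrier_mat n n"
    and "mat_le_entrywise n (1\<^sub>m n - X) (A * B - B * A)"
  shows "mat_trace X \<ge> real n
         \<and> real_spectral_radius X \<ge> 1
         \<and> (\<forall>N. is_norm_on n N \<longrightarrow> induced_op_norm n N X \<ge> 1)
         \<and> (X * X = X \<longrightarrow> X = 1\<^sub>m n)"
proof -
  let ?C = "map_mat complex_of_real X"
  have trace: "real n \<le> mat_trace X"
    using assms(2-5) by (rule mat_trace_ge_dim_if_commutator_ge)
  have C: "?C \<in> carrier_mat n n" using assms(4) by simp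
  obtain k where k: "eigenvalue ?C k" "Re (trace ?C) \<le> real n * Re k"
    using exists_eigenvalue_Re_ge_mean[OF C assms(1)] by blast
  have "real n * 1 \<le> real n * Re k"
    using k(2) trace assms(4) by (simp add: trace_of_real mat_trace_eq_trace)
  hence "1 \<le> cmod k" using assms(1) complex_Re_le_cmod[of k] by simp
  hence radius: "1 \<le> real_spectral_radius X"
    using eigenvalue_cmod_le_real_spectral_radius[OF assms(4) k(1)] by linarith
  have "1 \<le> induced_op_norm n N X" if "is_norm_on n N" for N
    using vec_norm.real_spectral_radius_le_induced_op_norm[OF vec_norm.intro[OF that] assms(4,1)]
      radius by linarith
  thus ?thesis using trace radius idempotent_eq_one_if_mat_trace_ge[OF assms(4) _ trace] by blast
qed

end
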